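(* Let $G$ be a simple graph on $n$ vertices and $1\le k<n$ an integer such that $F_k(G)$ is regular. Then $F_k(\overline{G})$ is also regular, where $\overline{G}$ is the complement of $G$.
   Context: For a simple graph $G=(V,E)$ on $n$ vertices and an integer $1\le k<n$, the $k$-token graph $F_k(G)$ is the graph whose vertices are all $k$-element subsets of $V$, two such subsets $A,B$ being adjacent whenever their symmetric difference $A\triangle B$ is a pair $\{a,b\}$ with $a$ adjacent to $b$ in $G$. *)

theory Defs
  imports Main
begin

definition simple_graph :: "'a set \<Rightarrow> ('a \<Rightarrow> 'a \<Rightarrow> bool) \<Rightarrow> bool" where
  "simple_graph V E \<longleftrightarrow> finite V \<and> (\<forall>a b. E a b \<longrightarrow> a \<in> V \<and> b \<in> V)
     \<and> (\<forall>a b. E a b \<longrightarrow> E b a) \<and> (\<forall>a. \<not> E a a)"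

definition complement :: "'a set \<Rightarrow> ('a \<Rightarrow> 'a \<Rightarrow> bool) \<Rightarrow> 'a \<Rightarrow> 'a \<Rightarrow> bool" where
  "complement V E a b \<longleftrightarrow> a \<in> V \<and> b \<in> V \<and> a \<noteq> b \<and> \<not> E a b"

definition token_vertices :: "'a set \<Rightarrow> nat \<Rightarrow> 'a set set" where
  "token_vertices V k = {A. A \<subseteq> V \<and> card A = k}"

definition token_adj :: "('a \<Rightarrow> 'a \<Rightarrow> bool) \<Rightarrow> 'a set \<Rightarrow> 'a set \<Rightarrow> bool" where
  "token_adj E A B \<longleftrightarrow> (\<exists>a b. (A - B) \<union> (B - A) = {a, b} \<and> E a b)"

definition token_degree :: "'a set \<Rightarrow> ('a \<Rightarrow> 'a \<Rightarrow> bool) \<Rightarrow> nat \<Rightarrow> 'a set \<Rightarrow> nat" where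
  "token_degree V E k A = card {B \<in> token_vertices V k. token_adj E A B}"

definition token_graph_regular :: "'a set \<Rightarrow> ('a \<Rightarrow> 'a \<Rightarrow> bool) \<Rightarrow> nat \<Rightarrow> bool" where
  "token_graph_regular V E k \<longleftrightarrow>
     (\<exists>d. \<forall>A \<in> token_vertices V k. token_degree V E k A = d)"

end

theory Submission
  imports Defs
begin

text \<open>Two k-sets are adjacent in \<open>F\<^sub>k(G)\<close> exactly when one arises from the other by
  exchanging a token \<open>a \<in> A\<close> for an outside vertex \<open>b\<close> with \<open>ab\<close> an edge. So the degree
  of \<open>A\<close> in \<open>F\<^sub>k(G)\<close> is the number of edges of \<open>G\<close> across the cut \<open>(A, V - A)\<close>. Every
  pair across the cut is an edge of exactly one of \<open>G\<close> and its complement, hence the two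
  degrees of \<open>A\<close> add up to \<open>k (n - k)\<close>, independently of \<open>A\<close>.\<close>

lemma complement_simple_graph:
  assumes "simple_graph V E"
  shows "simple_graph V (complement V E)"
  using assms unfolding simple_graph_def complement_def by auto

definition cut_edges :: "'a set \<Rightarrow> ('a \<Rightarrow> 'a \<Rightarrow> bool) \<Rightarrow> 'a set \<Rightarrow> ('a \<times> 'a) set" where
  "cut_edges V E A = {(a, b) \<in> A \<times> (V - A). E a b}"

lemma exchange_diffs:
  assumes "a \<in> A" and "b \<notin> A"
  shows "A - insert b (A - {a}) = {a}" and "insert b (A - {a}) - A = {b}"
  using assms by auto

lemma token_adj_exchange_iff:
  assumes sym: "\<And>x y. E x y \<Longrightarrow> E y x" and "a \<in> A" and "b \<notin> A"
  shows "token_adj E A (insert b (A - {a})) \<longleftrightarrow> E a b"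
proof -
  have "(A - insert b (A - {a})) \<union> (insert b (A - {a}) - A) = {a, b}"
    using exchange_diffs[OF assms(2,3)] by auto
  then show ?thesis
    unfolding token_adj_def by (metis doubleton_eq_iff sym)
qed

lemma token_adj_exchangeE:
  assumes "finite A" and "finite B" and "card A = card B"
    and irrefl: "\<And>x. \<not> E x x" and "token_adj E A B"
  obtains a b where "a \<in> A" and "b \<notin> A" and "B = insert b (A - {a})"
proof -
  obtain x y where xy: "(A - B) \<union> (B - A) = {x, y}" and "E x y"
    using \<open>token_adj E A B\<close> unfolding token_adj_def by blast
  have "x \<noteq> y" using \<open>E x y\<close> irrefl by blast
  have "card (A - B) = card (B - A)"
    using assms(1-3) by (simp add: card_Diff_subset_Int Int_commute)
  moreover have "card (A - B) + card (B - A) = 2"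
  proof -
    have "card ((A - B) \<union> (B - A)) = card (A - B) + card (B - A)"
      using assms(1,2) by (intro card_Un_disjoint) auto
    with xy \<open>x \<noteq> y\<close> show ?thesis by simp
  qed
  ultimately have "card (A - B) = 1" and "card (B - A) = 1" by auto
  then obtain a b where "A - B = {a}" and "B - A = {b}"
    by (metis card_1_singletonE)
  then have "a \<in> A" "b \<notin> A" "B = insert b (A - {a})" by blast+
  then show thesis by (rule that)
qed

lemma token_degree_eq_card_cut_edges:
  assumes G: "simple_graph V E" and "A \<subseteq> V" and "card A = k"
  shows "token_degree V E k A = card (cut_edges V E A)"
proof -
  have "finite A" using G \<open>A \<subseteq> V\<close> finite_subset by (auto simp: simple_graph_def)
  have sym: "\<And>x y. E x y \<Longrightarrow> E y x" and irrefl: "\<And>x. \<not> E x x"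
    and inV: "\<And>x y. E x y \<Longrightarrow> x \<in> V \<and> y \<in> V"
    using G by (auto simp: simple_graph_def)
  define exchange where "exchange = (\<lambda>(a, b). insert b (A - {a}))"
  have "bij_betw exchange (cut_edges V E A) {B \<in> token_vertices V k. token_adj E A B}"
  proof (rule bij_betwI')
    fix p q assume "p \<in> cut_edges V E A" "q \<in> cut_edges V E A"
    then obtain a b a' b' where p: "p = (a, b)" "a \<in> A" "b \<notin> A"
      and q: "q = (a', b')" "a' \<in> A" "b' \<notin> A"
      by (auto simp: cut_edges_def)
    show "exchange p = exchange q \<longleftrightarrow> p = q"
    proof
      assume "exchange p = exchange q"
      then have "A - exchange p = A - exchange q" and "exchange p - A = exchange q - A"
        by simp_all
      then show "p = q"
        using exchange_diffs[OF p(2,3)] exchange_diffs[OF q(2,3)] by (simp add: p q exchange_def)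
    qed simp
  next
    fix p assume "p \<in> cut_edges V E A"
    then obtain a b where p: "p = (a, b)" "a \<in> A" "b \<in> V" "b \<notin> A" "E a b"
      by (auto simp: cut_edges_def)
    have "card (exchange p) = k"
      using p card_Suc_Diff1[OF \<open>finite A\<close> p(2)] \<open>card A = k\<close> \<open>finite A\<close>
      by (simp add: exchange_def)
    moreover have "exchange p \<subseteq> V" using p \<open>A \<subseteq> V\<close> by (auto simp: exchange_def)
    moreover have "token_adj E A (exchange p)"
      using token_adj_exchange_iff[of E, OF sym p(2,4)] p by (simp add: exchange_def)
    ultimately show "exchange p \<in> {B \<in> token_vertices V k. token_adj E A B}"
      by (simp add: token_vertices_def)
  next
    fix B assume "B \<in> {B \<in> token_vertices V k. token_adj E A B}"
    then have "B \<subseteq> V" "card B = k" "token_adj E A B"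
      by (auto simp: token_vertices_def)
    moreover have "finite B" using G \<open>B \<subseteq> V\<close> finite_subset by (auto simp: simple_graph_def)
    ultimately obtain a b where ab: "a \<in> A" "b \<notin> A" and B: "B = insert b (A - {a})"
      using token_adj_exchangeE[OF \<open>finite A\<close>] \<open>card A = k\<close> irrefl by metis
    then have "E a b" using \<open>token_adj E A B\<close> token_adj_exchange_iff[of E, OF sym] by blast
    then have "(a, b) \<in> cut_edges V E A" using ab inV by (simp add: cut_edges_def)
    then show "\<exists>p \<in> cut_edges V E A. B = exchange p" using B by (auto simp: exchange_def)
  qed
  then show ?thesis
    unfolding token_degree_def by (simp add: bij_betw_same_card)
qed

lemma card_cut_edges_complement:
  assumes "finite V" and "A \<subseteq> V"
  shows "card (cut_edges V (complement V E) A) = card A * (card V - card A) - card (cut_edges V E A)"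
proof -
  let ?S = "A \<times> (V - A)"
  have "finite ?S" using assms finite_subset by blast
  have "cut_edges V E A \<union> cut_edges V (complement V E) A = ?S"
    and "cut_edges V E A \<inter> cut_edges V (complement V E) A = {}"
    using assms(2) by (auto simp: cut_edges_def complement_def)
  then have "card (cut_edges V E A) + card (cut_edges V (complement V E) A) = card ?S"
    using \<open>finite ?S\<close> by (metis card_Un_disjoint finite_Un)
  moreover have "card ?S = card A * (card V - card A)"
    using assms by (simp add: card_cartesian_product card_Diff_subset finite_subset)
  ultimately show ?thesis by simp
qed

lemma token_degree_complement:
  assumes G: "simple_graph V E" and "A \<in> token_vertices V k"
  shows "token_degree V (complement V E) k A = k * (card V - k) - token_degree V E k A"
proof -
  have A: "A \<subseteq> V" "card A = k" using assms(2) by (auto simp: token_vertices_def)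
  have "finite V" using G by (simp add: simple_graph_def)
  show ?thesis
    using card_cut_edges_complement[OF \<open>finite V\<close> A(1), of E] A
      token_degree_eq_card_cut_edges[OF G A]
      token_degree_eq_card_cut_edges[OF complement_simple_graph[OF G] A]
    by simp
qed

theorem corollary1:
  fixes V :: "'a set" and E :: "'a \<Rightarrow> 'a \<Rightarrow> bool" and k :: nat
  assumes "simple_graph V E"
    and "1 \<le> k" and "k < card V"
    and "token_graph_regular V E k"
  shows "token_graph_regular V (complement V E) k"
proof -
  obtain d where "\<forall>A \<in> token_vertices V k. token_degree V E k A = d"
    using assms(4) unfolding token_graph_regular_def by blast
  then have "\<forall>A \<in> token_vertices V k. token_degree V (complement V E) k A = k * (card V - k) - d"
    using token_degree_complement[OF assms(1)] by simp
  then show ?thesis unfolding token_graph_regular_def by blast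
qed

end
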